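(* Let $(M,g)$ be a two-dimensional Riemannian manifold and $\xi$ a conformal Killing vector of $g$. Let $D$ be a real, symmetric, 2-covariant tensor which is transverse and traceless with respect to $g$ and satisfies the KID equation $\pounds_\xi D=0$. Then $D$ is a linear combination with constant coefficients of $$D_\xi:=\frac{1}{|\xi|_g^4}\Big(\boldsymbol{\xi}\otimes\boldsymbol{\xi}-\tfrac12|\xi|_g^2\,g\Big),\qquad D_{\xi,\xi^\perp}:=\frac{1}{2|\xi|_g^2|\xi^\perp|_g^2}\Big(\boldsymbol{\xi}\otimes\boldsymbol{\xi^\perp}+\boldsymbol{\xi^\perp}\otimes\boldsymbol{\xi}\Big),$$ where $\boldsymbol{\xi}:=g(\xi,\cdot)$ and $\boldsymbol{\xi^\perp}:=g(\xi^\perp,\cdot)$.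
   Context: Transverse and traceless means $\nabla_\alpha D^{\alpha\beta}=0$ and $D^\alpha{}_\alpha=0$, with indices raised by $g$ and $\nabla$ its Levi-Civita connection. In dimension $n$ the KID equation is $\pounds_\xi D+\frac{n-2}{n}(\mathrm{div}_g\xi)D=0$, which for $n=2$ reduces to $\pounds_\xi D=0$. $|\xi|_g^2=g(\xi,\xi)$. The vector field $\xi^\perp$ is a conformal Killing vector of $g$ which is everywhere orthogonal to $\xi$ and has the same norm as $\xi$ at every point (it is unique up to a global sign; in local coordinates $z$ with $g$ conformal to $4\,dz\,d\bar z$ and $\xi=f\partial_z+\bar f\partial_{\bar z}$, it is $\xi^\perp=i(f\partial_z-\bar f\partial_{\bar z})$). The tensors $D_\xi, D_{\xi,\xi^\perp}$ are defined where $\xi\neq0$; the result is local. *)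

theory Defs
  imports "HOL-Analysis.Analysis"
begin

text \<open>Local-coordinate rendering of 2-dimensional Riemannian geometry.\<close>

type_synonym pt = "real ^ 2"
type_synonym sfun = "pt \<Rightarrow> real"
type_synonym vfield = "pt \<Rightarrow> real ^ 2"          \<comment> \<open>contravariant components xi^i\<close>
type_synonym tfield = "pt \<Rightarrow> real ^ 2 ^ 2"      \<comment> \<open>covariant components T_ij = T x $ i $ j\<close>

definition pd :: "2 \<Rightarrow> sfun \<Rightarrow> sfun" where
  "pd i f x = frechet_derivative f (at x) (axis i 1)"

fun Ck_on :: "nat \<Rightarrow> sfun \<Rightarrow> pt set \<Rightarrow> bool" where
  "Ck_on 0 f U = continuous_on U f"
| "Ck_on (Suc k) f U = (f differentiable_on U \<and> (\<forall>i. Ck_on k (pd i f) U))"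

definition smooth_fun_on :: "sfun \<Rightarrow> pt set \<Rightarrow> bool" where
  "smooth_fun_on f U \<longleftrightarrow> (\<forall>k. Ck_on k f U)"

definition smooth_vfield_on :: "vfield \<Rightarrow> pt set \<Rightarrow> bool" where
  "smooth_vfield_on v U \<longleftrightarrow> (\<forall>i. smooth_fun_on (\<lambda>x. v x $ i) U)"

definition smooth_tfield_on :: "tfield \<Rightarrow> pt set \<Rightarrow> bool" where
  "smooth_tfield_on T U \<longleftrightarrow> (\<forall>i j. smooth_fun_on (\<lambda>x. T x $ i $ j) U)"

definition symmetric_tfield_on :: "tfield \<Rightarrow> pt set \<Rightarrow> bool" where
  "symmetric_tfield_on T U \<longleftrightarrow> (\<forall>x\<in>U. \<forall>i j. T x $ i $ j = T x $ j $ i)"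

definition riemannian_metric_on :: "tfield \<Rightarrow> pt set \<Rightarrow> bool" where
  "riemannian_metric_on g U \<longleftrightarrow>
     smooth_tfield_on g U \<and> symmetric_tfield_on g U \<and>
     (\<forall>x\<in>U. \<forall>v::real^2. v \<noteq> 0 \<longrightarrow> (\<Sum>i\<in>UNIV. \<Sum>j\<in>UNIV. g x $ i $ j * v $ i * v $ j) > 0)"

definition ginv :: "tfield \<Rightarrow> tfield" where
  "ginv g x = matrix_inv (g x)"

text \<open>Christoffel symbols Gamma^k_ij = christoffel g x k i j.\<close>
definition christoffel :: "tfield \<Rightarrow> pt \<Rightarrow> 2 \<Rightarrow> 2 \<Rightarrow> 2 \<Rightarrow> real" where
  "christoffel g x k i j =
     (1/2) * (\<Sum>l\<in>UNIV. ginv g x $ k $ l *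
        (pd i (\<lambda>y. g y $ j $ l) x + pd j (\<lambda>y. g y $ i $ l) x - pd l (\<lambda>y. g y $ i $ j) x))"

text \<open>Covariant derivative of a covariant 2-tensor: (nabla_a T)_bc = cov_deriv g T x a b c.\<close>
definition cov_deriv :: "tfield \<Rightarrow> tfield \<Rightarrow> pt \<Rightarrow> 2 \<Rightarrow> 2 \<Rightarrow> 2 \<Rightarrow> real" where
  "cov_deriv g T x a b c =
     pd a (\<lambda>y. T y $ b $ c) x
     - (\<Sum>l\<in>UNIV. christoffel g x l a b * T x $ l $ c)
     - (\<Sum>l\<in>UNIV. christoffel g x l a c * T x $ b $ l)"

text \<open>Transverse: nabla_a D^{ab} = 0, written with the first index raised and the
  free index lowered (equivalent by metric compatibility): g^{ac} nabla_a D_{cb} = 0.\<close>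
definition transverse_on :: "tfield \<Rightarrow> tfield \<Rightarrow> pt set \<Rightarrow> bool" where
  "transverse_on g D U \<longleftrightarrow>
     (\<forall>x\<in>U. \<forall>b. (\<Sum>a\<in>UNIV. \<Sum>c\<in>UNIV. ginv g x $ a $ c * cov_deriv g D x a c b) = 0)"

definition traceless_on :: "tfield \<Rightarrow> tfield \<Rightarrow> pt set \<Rightarrow> bool" where
  "traceless_on g D U \<longleftrightarrow> (\<forall>x\<in>U. (\<Sum>a\<in>UNIV. \<Sum>b\<in>UNIV. ginv g x $ a $ b * D x $ a $ b) = 0)"

definition lie_deriv :: "vfield \<Rightarrow> tfield \<Rightarrow> pt \<Rightarrow> 2 \<Rightarrow> 2 \<Rightarrow> real" where
  "lie_deriv v T x i j =
     (\<Sum>k\<in>UNIV. v x $ k * pd k (\<lambda>y. T y $ i $ j) x)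
     + (\<Sum>k\<in>UNIV. T x $ k $ j * pd i (\<lambda>y. v y $ k) x)
     + (\<Sum>k\<in>UNIV. T x $ i $ k * pd j (\<lambda>y. v y $ k) x)"

definition conformal_killing_on :: "tfield \<Rightarrow> vfield \<Rightarrow> pt set \<Rightarrow> bool" where
  "conformal_killing_on g v U \<longleftrightarrow> smooth_vfield_on v U \<and>
     (\<exists>psi :: sfun. \<forall>x\<in>U. \<forall>i j. lie_deriv v g x i j = psi x * g x $ i $ j)"

definition gdot :: "tfield \<Rightarrow> pt \<Rightarrow> real^2 \<Rightarrow> real^2 \<Rightarrow> real" where
  "gdot g x u w = (\<Sum>i\<in>UNIV. \<Sum>j\<in>UNIV. g x $ i $ j * u $ i * w $ j)"

text \<open>Metric dual one-form (boldface xi): xi_i = g_ij xi^j.\<close>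
definition flat :: "tfield \<Rightarrow> vfield \<Rightarrow> pt \<Rightarrow> real^2" where
  "flat g v x = (\<chi> i. \<Sum>j\<in>UNIV. g x $ i $ j * v x $ j)"

definition D_xi :: "tfield \<Rightarrow> vfield \<Rightarrow> tfield" where
  "D_xi g v x = (\<chi> i j. (flat g v x $ i * flat g v x $ j - (1/2) * gdot g x (v x) (v x) * g x $ i $ j)
                        / (gdot g x (v x) (v x))^2)"

definition D_xi_perp :: "tfield \<Rightarrow> vfield \<Rightarrow> vfield \<Rightarrow> tfield" where
  "D_xi_perp g v w x = (\<chi> i j. (flat g v x $ i * flat g w x $ j + flat g w x $ i * flat g v x $ j)
                        / (2 * gdot g x (v x) (v x) * gdot g x (w x) (w x)))"

end

theory Submission
  imports Defs
begin

(* In the frame (xi, xi^perp), orthogonal with |xi^perp| = |xi|, a symmetric tracefree D is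
   determined by A = D(xi,xi) and B = D(xi,xi^perp): D = 2A D_xi + 2B D_{xi,xi^perp}.  So it
   suffices to show dA = dB = 0, i.e. that A and B are annihilated by xi and by xi^perp.
   Applying L_xi g = psi g to the constant functions g(xi,xi^perp) and |xi^perp|^2 - |xi|^2 gives
   [xi,xi^perp] = 0, and then the KID equation gives xi(A) = xi(B) = 0.  Since the inverse metric
   is (xi xi + xi^perp xi^perp)/|xi|^2, transversality says
   xi(D(xi,Y)) + xi^perp(D(xi^perp,Y)) = D(xi, nabla_xi Y) + D(xi^perp, nabla_{xi^perp} Y)
   (the terms with nabla_xi xi + nabla_{xi^perp} xi^perp vanish); metric compatibility and
   torsion-freeness make the right-hand side vanish for Y = xi and Y = xi^perp, which yields
   xi^perp(B) = -xi(A) = 0 and xi^perp(A) = xi(B) = 0. *)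

lemma pd_eq: "(f has_derivative f') (at x) \<Longrightarrow> pd k f x = f' (axis k 1)"
  unfolding pd_def using frechet_derivative_at by metis

lemma pd_const: "pd k (\<lambda>y. c) x = 0"
  using pd_eq[OF has_derivative_const] by simp

lemma pd_add:
  assumes "f differentiable at x" "h differentiable at x"
  shows "pd k (\<lambda>y. f y + h y) x = pd k f x + pd k h x"
proof -
  obtain F H where F: "(f has_derivative F) (at x)" and H: "(h has_derivative H) (at x)"
    using assms unfolding differentiable_def by blast
  show ?thesis
    using pd_eq[OF has_derivative_add[OF F H]] pd_eq[OF F] pd_eq[OF H] by simp
qed

lemma pd_minus:
  assumes "f differentiable at x"
  shows "pd k (\<lambda>y. - f y) x = - pd k f x"
proof -
  obtain F where F: "(f has_derivative F) (at x)"
    using assms unfolding differentiable_def by blast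
  show ?thesis
    using pd_eq[OF has_derivative_minus[OF F]] pd_eq[OF F] by simp
qed

lemma pd_mult:
  assumes "f differentiable at x" "h differentiable at x"
  shows "pd k (\<lambda>y. f y * h y) x = f x * pd k h x + pd k f x * h x"
proof -
  obtain F H where F: "(f has_derivative F) (at x)" and H: "(h has_derivative H) (at x)"
    using assms unfolding differentiable_def by blast
  show ?thesis
    using pd_eq[OF has_derivative_mult[OF F H]] pd_eq[OF F] pd_eq[OF H] by simp
qed

lemma pd_sum:
  assumes "finite S" "\<And>i. i \<in> S \<Longrightarrow> f i differentiable at x"
  shows "pd k (\<lambda>y. \<Sum>i\<in>S. f i y) x = (\<Sum>i\<in>S. pd k (f i) x)"
  using assms
proof (induction S rule: finite_induct)
  case empty
  then show ?case by (simp add: pd_const)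
next
  case (insert a S)
  then have "pd k (\<lambda>y. f a y + (\<Sum>i\<in>S. f i y)) x = pd k (f a) x + pd k (\<lambda>y. \<Sum>i\<in>S. f i y) x"
    by (intro pd_add) (auto intro!: differentiable_sum)
  with insert show ?case by simp
qed

lemma pd_cong_open:
  assumes "open U" "x \<in> U" "\<And>y. y \<in> U \<Longrightarrow> f y = h y" "h differentiable at x"
  shows "pd k f x = pd k h x"
  unfolding pd_def using frechet_derivative_transform_within_open assms by metis

lemma pd_eq_0_if_constant_on_open:
  assumes "open U" "x \<in> U" "\<And>y. y \<in> U \<Longrightarrow> f y = c"
  shows "pd k f x = 0"
  using pd_cong_open[of U x f "\<lambda>y. c" k] assms pd_const by auto

lemma has_derivative_zero_if_pd_eq_0:
  assumes "f differentiable at x" "\<And>k. pd k f x = 0"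
  shows "(f has_derivative (\<lambda>h. 0)) (at x)"
proof -
  let ?F = "frechet_derivative f (at x)"
  have F: "(f has_derivative ?F) (at x)"
    using assms(1) frechet_derivative_works by blast
  have "?F h = 0" for h :: "real^2"
  proof -
    have "?F h = ?F (\<Sum>i\<in>UNIV. h$i *s axis i 1)"
      by (simp add: basis_expansion)
    also have "\<dots> = (\<Sum>i\<in>UNIV. h$i * ?F (axis i 1))"
      using has_derivative_linear[OF F] by (simp add: linear_sum linear_scale scalar_mult_eq_scaleR)
    also have "\<dots> = 0"
      using assms(2) by (simp add: pd_def)
    finally show ?thesis .
  qed
  then have "?F = (\<lambda>h. 0)" by blast
  then show ?thesis using F by simp
qed

lemma constant_on_if_pd_eq_0:
  assumes "open U" "connected U"
    and "\<And>x. x \<in> U \<Longrightarrow> f differentiable at x"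
    and "\<And>x k. x \<in> U \<Longrightarrow> pd k f x = 0"
  obtains c where "\<And>x. x \<in> U \<Longrightarrow> f x = c"
proof -
  have "continuous_on U f"
    using assms(3) differentiable_imp_continuous_within continuous_at_imp_continuous_on by blast
  moreover have "\<forall>x\<in>U - {}. (f has_derivative (\<lambda>h. 0)) (at x within U)"
    using assms(3,4) has_derivative_zero_if_pd_eq_0 has_derivative_at_withinI by blast
  ultimately have "f constant_on U"
    using has_derivative_zero_connected_constant_on[OF assms(2,1) finite.emptyI] by blast
  then show ?thesis using that unfolding constant_on_def by blast
qed

lemma smooth_fun_on_differentiable:
  assumes "smooth_fun_on f U" "open U" "x \<in> U"
  shows "f differentiable at x"
proof -
  have "Ck_on (Suc 0) f U"
    using assms(1) unfolding smooth_fun_on_def by blast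
  then show ?thesis
    using assms(2,3) differentiable_on_eq_differentiable_at by auto
qed

definition differentiable_vfield_at :: "vfield \<Rightarrow> pt \<Rightarrow> bool" where
  "differentiable_vfield_at Y x \<longleftrightarrow> (\<forall>i. (\<lambda>y. Y y$i) differentiable at x)"

definition differentiable_tfield_at :: "tfield \<Rightarrow> pt \<Rightarrow> bool" where
  "differentiable_tfield_at T x \<longleftrightarrow> (\<forall>i j. (\<lambda>y. T y$i$j) differentiable at x)"

lemma smooth_vfield_on_differentiable:
  "smooth_vfield_on Y U \<Longrightarrow> open U \<Longrightarrow> x \<in> U \<Longrightarrow> differentiable_vfield_at Y x"
  unfolding smooth_vfield_on_def differentiable_vfield_at_def
  using smooth_fun_on_differentiable by blast

lemma smooth_tfield_on_differentiable:
  "smooth_tfield_on T U \<Longrightarrow> open U \<Longrightarrow> x \<in> U \<Longrightarrow> differentiable_tfield_at T x"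
  unfolding smooth_tfield_on_def differentiable_tfield_at_def
  using smooth_fun_on_differentiable by blast

definition bform :: "real^2^2 \<Rightarrow> real^2 \<Rightarrow> real^2 \<Rightarrow> real" where
  "bform T u v = (\<Sum>i\<in>UNIV. \<Sum>j\<in>UNIV. T$i$j * u$i * v$j)"

lemma gdot_eq_bform: "gdot g x u v = bform (g x) u v"
  unfolding gdot_def bform_def ..

lemma bform_commute: "(\<And>i j. T$i$j = T$j$i) \<Longrightarrow> bform T u v = bform T v u"
  unfolding bform_def by (simp add: sum_2 algebra_simps)

lemma bform_zero [simp]: "bform T 0 v = 0" "bform T u 0 = 0"
  unfolding bform_def by simp_all

lemma bform_add_left: "bform T (u + w) v = bform T u v + bform T w v"
  unfolding bform_def by (simp add: sum_2 algebra_simps)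

lemma bform_diff_left: "bform T (u - w) v = bform T u v - bform T w v"
  unfolding bform_def by (simp add: sum_2 algebra_simps)

lemma bform_diff_matrix: "bform (T - S) u v = bform T u v - bform S u v"
  unfolding bform_def by (simp add: sum_2 algebra_simps)

lemma bform_linear_left: "bform T (a *\<^sub>R u + b *\<^sub>R w) v = a * bform T u v + b * bform T w v"
  unfolding bform_def by (simp add: sum_2 algebra_simps)

lemma bform_linear_right: "bform T u (a *\<^sub>R v + b *\<^sub>R w) = a * bform T u v + b * bform T u w"
  unfolding bform_def by (simp add: sum_2 algebra_simps)

lemma bform_differentiable:
  assumes "differentiable_tfield_at T x" "differentiable_vfield_at Y x" "differentiable_vfield_at Z x"
  shows "(\<lambda>y. bform (T y) (Y y) (Z y)) differentiable at x"
  using assms unfolding bform_def differentiable_tfield_at_def differentiable_vfield_at_def by simp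

definition vf_deriv :: "vfield \<Rightarrow> sfun \<Rightarrow> pt \<Rightarrow> real" where
  "vf_deriv X f x = (\<Sum>a\<in>UNIV. X x$a * pd a f x)"

definition lie_bracket :: "vfield \<Rightarrow> vfield \<Rightarrow> pt \<Rightarrow> real^2" where
  "lie_bracket X Y x =
     (\<chi> l. \<Sum>a\<in>UNIV. X x$a * pd a (\<lambda>y. Y y$l) x - Y x$a * pd a (\<lambda>y. X y$l) x)"

definition nabla :: "tfield \<Rightarrow> vfield \<Rightarrow> vfield \<Rightarrow> pt \<Rightarrow> real^2" where
  "nabla g X Y x =
     (\<chi> l. (\<Sum>a\<in>UNIV. X x$a * pd a (\<lambda>y. Y y$l) x) +
           (\<Sum>a\<in>UNIV. \<Sum>c\<in>UNIV. christoffel g x l a c * X x$a * Y x$c))"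

lemma lie_bracket_self [simp]: "lie_bracket X X x = 0"
  unfolding lie_bracket_def by (simp add: vec_eq_iff)

lemma vf_deriv_cong_open:
  assumes "open U" "x \<in> U" "\<And>y. y \<in> U \<Longrightarrow> f y = h y" "h differentiable at x"
  shows "vf_deriv X f x = vf_deriv X h x"
  unfolding vf_deriv_def using pd_cong_open[OF assms] by simp

lemma vf_deriv_eq_0_if_constant_on_open:
  assumes "open U" "x \<in> U" "\<And>y. y \<in> U \<Longrightarrow> f y = c"
  shows "vf_deriv X f x = 0"
  unfolding vf_deriv_def using pd_eq_0_if_constant_on_open[OF assms] by simp

lemma vf_deriv_minus:
  "f differentiable at x \<Longrightarrow> vf_deriv X (\<lambda>y. - f y) x = - vf_deriv X f x"
  unfolding vf_deriv_def by (simp add: pd_minus sum_negf)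

lemma vf_deriv_eq_inner: "vf_deriv X f x = (\<chi> k. pd k f x) \<bullet> X x"
  unfolding vf_deriv_def inner_vec_def by (simp add: mult.commute)

lemma pd_bform:
  assumes "differentiable_tfield_at T x" "differentiable_vfield_at Y x" "differentiable_vfield_at Z x"
  shows "pd a (\<lambda>y. bform (T y) (Y y) (Z y)) x =
    (\<Sum>b\<in>UNIV. \<Sum>c\<in>UNIV. pd a (\<lambda>y. T y$b$c) x * Y x$b * Z x$c
        + T x$b$c * pd a (\<lambda>y. Y y$b) x * Z x$c + T x$b$c * Y x$b * pd a (\<lambda>y. Z y$c) x)"
  using assms unfolding bform_def differentiable_tfield_at_def differentiable_vfield_at_def
  by (simp add: pd_sum pd_mult algebra_simps)

lemma vf_deriv_bform_lie_deriv:
  assumes "differentiable_tfield_at T x" "differentiable_vfield_at Y x" "differentiable_vfield_at Z x"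
  shows "vf_deriv X (\<lambda>y. bform (T y) (Y y) (Z y)) x =
      (\<Sum>b\<in>UNIV. \<Sum>c\<in>UNIV. lie_deriv X T x b c * Y x$b * Z x$c)
      + bform (T x) (lie_bracket X Y x) (Z x) + bform (T x) (Y x) (lie_bracket X Z x)"
  unfolding vf_deriv_def pd_bform[OF assms]
  unfolding bform_def lie_bracket_def lie_deriv_def
  by (simp add: sum_2 algebra_simps)

lemma vf_deriv_bform_lie_deriv_conformal:
  assumes "differentiable_tfield_at T x" "differentiable_vfield_at Y x" "differentiable_vfield_at Z x"
    and "\<And>i j. lie_deriv X T x i j = c * T x$i$j"
  shows "vf_deriv X (\<lambda>y. bform (T y) (Y y) (Z y)) x =
      c * bform (T x) (Y x) (Z x)
      + bform (T x) (lie_bracket X Y x) (Z x) + bform (T x) (Y x) (lie_bracket X Z x)"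
proof -
  have "(\<Sum>b\<in>UNIV. \<Sum>d\<in>UNIV. lie_deriv X T x b d * Y x$b * Z x$d) = c * bform (T x) (Y x) (Z x)"
    unfolding assms(4) bform_def by (simp add: sum_2 algebra_simps)
  then show ?thesis
    unfolding vf_deriv_bform_lie_deriv[OF assms(1-3)] by simp
qed

lemma cov_deriv_contract:
  assumes "differentiable_tfield_at T x" "differentiable_vfield_at Y x" "differentiable_vfield_at Z x"
  shows "(\<Sum>a\<in>UNIV. \<Sum>b\<in>UNIV. \<Sum>c\<in>UNIV. X x$a * Y x$b * Z x$c * cov_deriv g T x a b c) =
      vf_deriv X (\<lambda>y. bform (T y) (Y y) (Z y)) x
      - bform (T x) (nabla g X Y x) (Z x) - bform (T x) (Y x) (nabla g X Z x)"
  unfolding vf_deriv_def pd_bform[OF assms]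
  unfolding bform_def nabla_def cov_deriv_def
  by (simp add: sum_2 algebra_simps)

lemma christoffel_lowered:
  assumes inv: "g x ** ginv g x = mat 1" and symm: "\<And>i j. g x$i$j = g x$j$i"
  shows "(\<Sum>l\<in>UNIV. christoffel g x l a b * g x$l$c) =
     (1/2) * (pd a (\<lambda>y. g y$b$c) x + pd b (\<lambda>y. g y$a$c) x - pd c (\<lambda>y. g y$a$b) x)"
proof -
  define V where "V m = pd a (\<lambda>y. g y$b$m) x + pd b (\<lambda>y. g y$a$m) x - pd m (\<lambda>y. g y$a$b) x" for m
  have kronecker: "g x$c$1 * ginv g x$1$m + g x$c$2 * ginv g x$2$m = (if c = m then 1 else 0)" for m
  proof -
    have "(g x ** ginv g x)$c$m = (if c = m then 1 else 0)"
      using inv by (simp add: mat_def)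
    then show ?thesis by (simp add: matrix_matrix_mult_def sum_2)
  qed
  have "(\<Sum>l\<in>UNIV. christoffel g x l a b * g x$l$c) =
     (1/2) * (\<Sum>m\<in>UNIV. (g x$c$1 * ginv g x$1$m + g x$c$2 * ginv g x$2$m) * V m)"
    unfolding christoffel_def V_def by (simp add: sum_2 symm[of _ c] algebra_simps)
  also have "\<dots> = (1/2) * V c"
    unfolding kronecker using exhaust_2[of c] by (auto simp: sum_2)
  finally show ?thesis by (simp add: V_def)
qed

lemma cov_deriv_metric_eq_0:
  assumes inv: "g x ** ginv g x = mat 1" and symm: "\<And>i j. g x$i$j = g x$j$i"
    and pd_sym: "\<And>k i j. pd k (\<lambda>y. g y$i$j) x = pd k (\<lambda>y. g y$j$i) x"
  shows "cov_deriv g g x a b c = 0"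
proof -
  have "(\<Sum>l\<in>UNIV. christoffel g x l a c * g x$b$l) = (\<Sum>l\<in>UNIV. christoffel g x l a c * g x$l$b)"
    by (simp add: symm[of b])
  then show ?thesis
    unfolding cov_deriv_def christoffel_lowered[OF inv symm] using pd_sym[of a c b]
    by (simp add: algebra_simps)
qed

lemma vf_deriv_metric:
  assumes "g x ** ginv g x = mat 1" "\<And>i j. g x$i$j = g x$j$i"
    and "\<And>k i j. pd k (\<lambda>y. g y$i$j) x = pd k (\<lambda>y. g y$j$i) x"
    and "differentiable_tfield_at g x" "differentiable_vfield_at Y x" "differentiable_vfield_at Z x"
  shows "vf_deriv X (\<lambda>y. bform (g y) (Y y) (Z y)) x =
      bform (g x) (nabla g X Y x) (Z x) + bform (g x) (Y x) (nabla g X Z x)"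
  using cov_deriv_contract[OF assms(4-6), of X g] cov_deriv_metric_eq_0[OF assms(1-3)] by simp

lemma nabla_torsion_free:
  assumes pd_sym: "\<And>k i j. pd k (\<lambda>y. g y$i$j) x = pd k (\<lambda>y. g y$j$i) x"
  shows "nabla g X Y x - nabla g Y X x = lie_bracket X Y x"
proof -
  have "christoffel g x l a c = christoffel g x l c a" for l a c
    unfolding christoffel_def using pd_sym by (simp add: algebra_simps)
  then have "(\<Sum>a\<in>UNIV. \<Sum>c\<in>UNIV. christoffel g x l a c * X x$a * Y x$c) =
        (\<Sum>a\<in>UNIV. \<Sum>c\<in>UNIV. christoffel g x l a c * Y x$a * X x$c)" for l
    by (simp add: sum_2 algebra_simps)
  then show ?thesis
    unfolding nabla_def lie_bracket_def by (simp add: vec_eq_iff sum_subtractf)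
qed

locale conformal_frame =
  fixes G :: "real^2^2" and e1 e2 :: "real^2" and N :: real
  assumes symmetric: "\<And>i j. G$i$j = G$j$i"
    and positive: "\<And>v. v \<noteq> 0 \<Longrightarrow> bform G v v > 0"
    and norm_e1: "bform G e1 e1 = N" and norm_e2: "bform G e2 e2 = N"
    and orthogonal: "bform G e1 e2 = 0"
    and e1_nonzero: "e1 \<noteq> 0"
begin

lemma N_pos: "N > 0"
  using positive[OF e1_nonzero] norm_e1 by simp

lemma orthogonal': "bform G e2 e1 = 0"
  using orthogonal bform_commute[OF symmetric] by metis

lemma det_nonzero: "e1$1 * e2$2 - e1$2 * e2$1 \<noteq> 0"
proof
  assume det: "e1$1 * e2$2 - e1$2 * e2$1 = 0"
  have "e2$1 * bform G e1 e1 - e1$1 * bform G e1 e2 =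
      - (e1$1 * e2$2 - e1$2 * e2$1) * (G$1$2 * e1$1 + G$2$2 * e1$2)"
    unfolding bform_def by (simp add: sum_2 algebra_simps)
  then have "e2$1 = 0" using det norm_e1 orthogonal N_pos by simp
  moreover have "e2$2 * bform G e1 e1 - e1$2 * bform G e1 e2 =
      (e1$1 * e2$2 - e1$2 * e2$1) * (G$1$1 * e1$1 + G$2$1 * e1$2)"
    unfolding bform_def by (simp add: sum_2 algebra_simps)
  then have "e2$2 = 0" using det norm_e1 orthogonal N_pos by simp
  ultimately have "e2 = 0" by (simp add: vec_eq_iff forall_2)
  then show False using norm_e2 N_pos by simp
qed

lemma eq_0_if_inner_frame_eq_0:
  fixes r :: "real^2"
  assumes "r \<bullet> e1 = 0" "r \<bullet> e2 = 0"
  shows "r = 0"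
proof -
  have "r$1 * (e1$1 * e2$2 - e1$2 * e2$1) = e2$2 * (r \<bullet> e1) - e1$2 * (r \<bullet> e2)"
    "r$2 * (e1$1 * e2$2 - e1$2 * e2$1) = e1$1 * (r \<bullet> e2) - e2$1 * (r \<bullet> e1)"
    by (simp_all add: inner_vec_def sum_2 algebra_simps)
  then show ?thesis using assms det_nonzero by (simp add: vec_eq_iff forall_2)
qed

lemma eq_0_if_bform_frame_eq_0:
  assumes "bform G w e1 = 0" "bform G w e2 = 0"
  shows "w = 0"
proof -
  define u where "u = (\<chi> j. w$1 * G$1$j + w$2 * G$2$j)"
  have "u \<bullet> e1 = bform G w e1" "u \<bullet> e2 = bform G w e2" "u \<bullet> w = bform G w w"
    unfolding u_def bform_def by (simp_all add: inner_vec_def sum_2 algebra_simps)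
  then have "u = 0"
    using eq_0_if_inner_frame_eq_0 assms by simp
  then have "bform G w w = 0"
    using \<open>u \<bullet> w = bform G w w\<close> by simp
  then show ?thesis using positive by force
qed

lemma frame_expansion: "v = (bform G v e1 / N) *\<^sub>R e1 + (bform G v e2 / N) *\<^sub>R e2"
proof -
  define w where "w = v - ((bform G v e1 / N) *\<^sub>R e1 + (bform G v e2 / N) *\<^sub>R e2)"
  have "bform G w e1 = 0" "bform G w e2 = 0"
    unfolding w_def bform_diff_left bform_linear_left
    using norm_e1 norm_e2 orthogonal orthogonal' N_pos by simp_all
  then have "w = 0" by (rule eq_0_if_bform_frame_eq_0)
  then show ?thesis unfolding w_def by simp
qed

lemma bform_frame_expansion:
  "bform T u v = (bform G v e1 / N) * bform T u e1 + (bform G v e2 / N) * bform T u e2"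
  by (subst frame_expansion[of v]) (simp only: bform_linear_right)

definition frame_inverse :: "real^2^2" where
  "frame_inverse = (\<chi> i j. (e1$i * e1$j + e2$i * e2$j) / N)"

lemma frame_inverse_left: "frame_inverse ** G = mat 1"
proof -
  have entry: "(frame_inverse ** G)$i$j = (bform G (axis j 1) e1 / N) * e1$i + (bform G (axis j 1) e2 / N) * e2$i"
    for i j
  proof -
    have "bform G (axis j 1) e1 = e1$1 * G$1$j + e1$2 * G$2$j"
      "bform G (axis j 1) e2 = e2$1 * G$1$j + e2$2 * G$2$j"
      unfolding bform_def using exhaust_2[of j] by (auto simp: sum_2 axis_def symmetric[of 1 2])
    moreover have "(frame_inverse ** G)$i$j =
        (e1$i * (e1$1 * G$1$j + e1$2 * G$2$j) + e2$i * (e2$1 * G$1$j + e2$2 * G$2$j)) / N"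
      unfolding frame_inverse_def
      by (simp add: matrix_matrix_mult_def sum_2 add_divide_distrib[symmetric]) (simp add: algebra_simps)
    ultimately show ?thesis by (simp add: algebra_simps add_divide_distrib)
  qed
  have "(frame_inverse ** G)$i$j = (mat 1 :: real^2^2)$i$j" for i j
    using arg_cong[OF frame_expansion[of "axis j 1"], of "\<lambda>v. v$i"] unfolding entry
    by (simp add: mat_def axis_def)
  then show ?thesis by (simp add: vec_eq_iff)
qed

lemma matrix_inv_eq_frame_inverse: "matrix_inv G = frame_inverse"
proof -
  have right: "G ** frame_inverse = mat 1"
    using frame_inverse_left matrix_left_right_inverse by blast
  then have "G ** matrix_inv G = mat 1 \<and> matrix_inv G ** G = mat 1"
    using frame_inverse_left unfolding matrix_inv_def by (rule someI[of _ frame_inverse, OF conjI])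
  then have "matrix_inv G = matrix_inv G ** (G ** frame_inverse)"
    using right by simp
  also have "\<dots> = frame_inverse"
    using \<open>G ** matrix_inv G = mat 1 \<and> matrix_inv G ** G = mat 1\<close> by (simp add: matrix_mul_assoc)
  finally show ?thesis .
qed

lemma trace_frame_inverse:
  "(\<Sum>a\<in>UNIV. \<Sum>b\<in>UNIV. frame_inverse$a$b * T$a$b) = (bform T e1 e1 + bform T e2 e2) / N"
  unfolding frame_inverse_def bform_def
  by (simp add: sum_2 add_divide_distrib[symmetric]) (simp add: algebra_simps)

lemma contract_frame_inverse:
  fixes cv :: "2 \<Rightarrow> 2 \<Rightarrow> 2 \<Rightarrow> real"
  shows "(\<Sum>c\<in>UNIV. Y$c * (\<Sum>a\<in>UNIV. \<Sum>b\<in>UNIV. frame_inverse$a$b * cv a b c)) =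
      ((\<Sum>a\<in>UNIV. \<Sum>b\<in>UNIV. \<Sum>c\<in>UNIV. e1$a * e1$b * Y$c * cv a b c)
     + (\<Sum>a\<in>UNIV. \<Sum>b\<in>UNIV. \<Sum>c\<in>UNIV. e2$a * e2$b * Y$c * cv a b c)) / N"
  unfolding frame_inverse_def using N_pos by (simp add: sum_2 field_simps)

lemma traceless_expansion:
  assumes sym: "\<And>i j. T$i$j = T$j$i" and trace: "bform T e1 e1 + bform T e2 e2 = 0"
  defines "f1 \<equiv> \<chi> i. \<Sum>j\<in>UNIV. G$i$j * e1$j" and "f2 \<equiv> \<chi> i. \<Sum>j\<in>UNIV. G$i$j * e2$j"
  shows "T$i$j = 2 * bform T e1 e1 * ((f1$i * f1$j - (1/2) * N * G$i$j) / N^2)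
      + 2 * bform T e1 e2 * ((f1$i * f2$j + f2$i * f1$j) / (2 * N * N))"
proof -
  define a where "a = bform T e1 e1"
  define b where "b = bform T e1 e2"
  define R :: "real^2^2" where "R = (\<chi> i j. 2 * a * ((f1$i * f1$j - (1/2) * N * G$i$j) / N^2)
      + 2 * b * ((f1$i * f2$j + f2$i * f1$j) / (2 * N * N)))"
  define Q where "Q = T - R"
  have "bform R u v * N^2 = a * (2 * bform G u e1 * bform G v e1 - N * bform G u v)
      + b * (bform G u e1 * bform G v e2 + bform G u e2 * bform G v e1)" for u v
    unfolding R_def bform_def f1_def f2_def using N_pos
    by (simp add: sum_2 field_simps power2_eq_square)
  then have QN: "bform Q u v * N^2 = bform T u v * N^2 - (a * (2 * bform G u e1 * bform G v e1 - N * bform G u v)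
      + b * (bform G u e1 * bform G v e2 + bform G u e2 * bform G v e1))" for u v
    unfolding Q_def bform_diff_matrix left_diff_distrib by simp
  have T21: "bform T e2 e1 = b"
    unfolding b_def using bform_commute[OF sym] by metis
  have T22: "bform T e2 e2 = - a"
    unfolding a_def using trace by simp
  have Q: "bform Q u v = 0" if "u \<in> {e1, e2}" "v \<in> {e1, e2}" for u v
  proof -
    have "bform Q u v * N^2 = 0"
      using that unfolding QN
      by (auto simp: norm_e1 norm_e2 orthogonal orthogonal' T21 T22 a_def[symmetric] b_def[symmetric]
          algebra_simps power2_eq_square)
    then show ?thesis using N_pos by simp
  qed
  have "(Q *v v) \<bullet> u = bform Q u v" for u v
    unfolding bform_def by (simp add: inner_vec_def matrix_vector_mult_def sum_2 algebra_simps)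
  then have "Q *v e1 = 0" "Q *v e2 = 0"
    using Q eq_0_if_inner_frame_eq_0 by simp_all
  moreover have "(Q *v v)$i = Q$i \<bullet> v" for v i
    by (simp add: inner_vec_def matrix_vector_mult_def)
  ultimately have "Q$i = 0" for i
    using eq_0_if_inner_frame_eq_0 by (metis zero_index)
  then have "T$i$j = R$i$j"
    unfolding Q_def by (simp add: vec_eq_iff)
  then show ?thesis unfolding R_def a_def b_def by simp
qed

end

locale kid_setting =
  fixes U :: "pt set" and g D :: tfield and \<xi> \<xi>p :: vfield and s :: sfun
  assumes open_U: "open U"
    and metric: "riemannian_metric_on g U"
    and smooth_\<xi>: "smooth_vfield_on \<xi> U"
    and smooth_\<xi>p: "smooth_vfield_on \<xi>p U"
    and conformal_\<xi>: "\<And>x i j. x \<in> U \<Longrightarrow> lie_deriv \<xi> g x i j = s x * g x$i$j"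
    and \<xi>_nonzero: "\<And>x. x \<in> U \<Longrightarrow> \<xi> x \<noteq> 0"
    and orthogonal: "\<And>x. x \<in> U \<Longrightarrow> bform (g x) (\<xi> x) (\<xi>p x) = 0"
    and norm_eq: "\<And>x. x \<in> U \<Longrightarrow> bform (g x) (\<xi>p x) (\<xi>p x) = bform (g x) (\<xi> x) (\<xi> x)"
    and smooth_D: "smooth_tfield_on D U"
    and symmetric_D: "symmetric_tfield_on D U"
    and transverse: "transverse_on g D U"
    and traceless: "traceless_on g D U"
    and kid: "\<And>x i j. x \<in> U \<Longrightarrow> lie_deriv \<xi> D x i j = 0"
begin

definition N :: sfun where "N x = bform (g x) (\<xi> x) (\<xi> x)"
definition A :: sfun where "A x = bform (D x) (\<xi> x) (\<xi> x)"
definition B :: sfun where "B x = bform (D x) (\<xi> x) (\<xi>p x)"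

lemma g_symmetric: "x \<in> U \<Longrightarrow> g x$i$j = g x$j$i"
  using metric unfolding riemannian_metric_on_def symmetric_tfield_on_def by blast

lemma D_symmetric: "x \<in> U \<Longrightarrow> D x$i$j = D x$j$i"
  using symmetric_D unfolding symmetric_tfield_on_def by blast

lemma g_positive: "x \<in> U \<Longrightarrow> v \<noteq> 0 \<Longrightarrow> bform (g x) v v > 0"
  using metric unfolding riemannian_metric_on_def bform_def by blast

lemma frame: "x \<in> U \<Longrightarrow> conformal_frame (g x) (\<xi> x) (\<xi>p x) (N x)"
  by unfold_locales (use g_symmetric g_positive \<xi>_nonzero orthogonal norm_eq in \<open>auto simp: N_def\<close>)

lemma differentiable_at:
  assumes "x \<in> U"
  shows "differentiable_tfield_at g x" "differentiable_tfield_at D x"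
    "differentiable_vfield_at \<xi> x" "differentiable_vfield_at \<xi>p x"
  using metric smooth_D smooth_\<xi> smooth_\<xi>p open_U assms
  by (auto simp: riemannian_metric_on_def smooth_tfield_on_differentiable smooth_vfield_on_differentiable)

lemma pd_g_symmetric:
  assumes "x \<in> U"
  shows "pd k (\<lambda>y. g y$i$j) x = pd k (\<lambda>y. g y$j$i) x"
  using differentiable_at(1)[OF assms] g_symmetric
  by (intro pd_cong_open[OF open_U assms]) (auto simp: differentiable_tfield_at_def)

lemma ginv_eq: "x \<in> U \<Longrightarrow> ginv g x = conformal_frame.frame_inverse (\<xi> x) (\<xi>p x) (N x)"
  unfolding ginv_def using conformal_frame.matrix_inv_eq_frame_inverse[OF frame] .

lemma metric_inverse: "x \<in> U \<Longrightarrow> g x ** ginv g x = mat 1"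
  unfolding ginv_def
  using conformal_frame.matrix_inv_eq_frame_inverse[OF frame] conformal_frame.frame_inverse_left[OF frame]
    matrix_left_right_inverse by metis

lemma vf_deriv_metric_at:
  assumes "x \<in> U" "differentiable_vfield_at Y x" "differentiable_vfield_at Z x"
  shows "vf_deriv X (\<lambda>y. bform (g y) (Y y) (Z y)) x =
      bform (g x) (nabla g X Y x) (Z x) + bform (g x) (Y x) (nabla g X Z x)"
  using vf_deriv_metric[OF metric_inverse g_symmetric pd_g_symmetric differentiable_at(1) assms(2,3)]
    assms(1) by simp

lemma vf_deriv_orthogonal: "x \<in> U \<Longrightarrow> vf_deriv X (\<lambda>y. bform (g y) (\<xi> y) (\<xi>p y)) x = 0"
  by (rule vf_deriv_eq_0_if_constant_on_open[OF open_U]) (auto intro: orthogonal)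

lemma N_differentiable: "x \<in> U \<Longrightarrow> N differentiable at x"
  unfolding N_def[abs_def] by (intro bform_differentiable differentiable_at)

lemma A_differentiable: "x \<in> U \<Longrightarrow> A differentiable at x"
  unfolding A_def[abs_def] by (intro bform_differentiable differentiable_at)

lemma B_differentiable: "x \<in> U \<Longrightarrow> B differentiable at x"
  unfolding B_def[abs_def] by (intro bform_differentiable differentiable_at)

lemma vf_deriv_norm_eq:
  "x \<in> U \<Longrightarrow> vf_deriv X (\<lambda>y. bform (g y) (\<xi>p y) (\<xi>p y)) x = vf_deriv X N x"
  by (rule vf_deriv_cong_open[OF open_U]) (auto simp: N_def norm_eq N_differentiable)

lemma lie_bracket_eq_0:
  assumes x: "x \<in> U"
  shows "lie_bracket \<xi> \<xi>p x = 0"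
proof -
  interpret F: conformal_frame "g x" "\<xi> x" "\<xi>p x" "N x" by (rule frame[OF x])
  define w where "w = lie_bracket \<xi> \<xi>p x"
  note lie = vf_deriv_bform_lie_deriv_conformal[OF differentiable_at(1)[OF x] _ _ conformal_\<xi>[OF x]]
  have "bform (g x) (\<xi> x) w = 0"
    using lie[OF differentiable_at(3,4)[OF x]] vf_deriv_orthogonal[OF x] orthogonal[OF x]
    unfolding w_def by simp
  then have w1: "bform (g x) w (\<xi> x) = 0"
    using bform_commute[OF g_symmetric[OF x]] by metis
  have "vf_deriv \<xi> (\<lambda>y. bform (g y) (\<xi>p y) (\<xi>p y)) x = s x * N x + 2 * bform (g x) w (\<xi>p x)"
    using lie[OF differentiable_at(4,4)[OF x]] bform_commute[OF g_symmetric[OF x], of w "\<xi>p x"]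
      norm_eq[OF x] unfolding w_def N_def by simp
  moreover have "vf_deriv \<xi> N x = s x * N x"
    using lie[OF differentiable_at(3,3)[OF x]] unfolding N_def by simp
  ultimately have w2: "bform (g x) w (\<xi>p x) = 0"
    using vf_deriv_norm_eq[OF x] by simp
  show ?thesis
    using F.eq_0_if_bform_frame_eq_0[OF w1 w2] unfolding w_def .
qed

lemma vf_deriv_\<xi>_A: "x \<in> U \<Longrightarrow> vf_deriv \<xi> A x = 0"
  unfolding A_def
  using vf_deriv_bform_lie_deriv_conformal[OF differentiable_at(2,3,3), of x \<xi> 0] kid by simp

lemma vf_deriv_\<xi>_B: "x \<in> U \<Longrightarrow> vf_deriv \<xi> B x = 0"
  unfolding B_def
  using vf_deriv_bform_lie_deriv_conformal[OF differentiable_at(2,3,4), of x \<xi> 0] kid lie_bracket_eq_0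
  by simp

lemma g_commute_\<xi>:
  "x \<in> U \<Longrightarrow> bform (g x) (\<xi> x) v = bform (g x) v (\<xi> x)"
  "x \<in> U \<Longrightarrow> bform (g x) (\<xi>p x) v = bform (g x) v (\<xi>p x)"
  using bform_commute[OF g_symmetric] by blast+

lemma nabla_orthogonal:
  assumes x: "x \<in> U"
  shows "bform (g x) (nabla g X \<xi> x) (\<xi>p x) + bform (g x) (nabla g X \<xi>p x) (\<xi> x) = 0"
  using vf_deriv_metric_at[OF x differentiable_at(3,4)[OF x]] vf_deriv_orthogonal[OF x]
  by (simp add: g_commute_\<xi>[OF x])

lemma nabla_norm_eq:
  assumes x: "x \<in> U"
  shows "bform (g x) (nabla g X \<xi>p x) (\<xi>p x) = bform (g x) (nabla g X \<xi> x) (\<xi> x)"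
  using vf_deriv_norm_eq[OF x, unfolded N_def[abs_def]]
  unfolding vf_deriv_metric_at[OF x differentiable_at(3,3)[OF x]]
    vf_deriv_metric_at[OF x differentiable_at(4,4)[OF x]]
  by (simp add: g_commute_\<xi>[OF x])

lemma nabla_\<xi>_\<xi>p_commute:
  assumes x: "x \<in> U"
  shows "nabla g \<xi> \<xi>p x = nabla g \<xi>p \<xi> x"
  using nabla_torsion_free[OF pd_g_symmetric[OF x], of \<xi> \<xi>p] lie_bracket_eq_0[OF x] by simp

lemma nabla_frame_sum_eq_0:
  assumes x: "x \<in> U"
  shows "nabla g \<xi> \<xi> x + nabla g \<xi>p \<xi>p x = 0"
proof -
  interpret F: conformal_frame "g x" "\<xi> x" "\<xi>p x" "N x" by (rule frame[OF x])
  note rel = nabla_orthogonal[OF x] nabla_norm_eq[OF x]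
  note commute = nabla_\<xi>_\<xi>p_commute[OF x]
  show ?thesis
  proof (rule F.eq_0_if_bform_frame_eq_0)
    show "bform (g x) (nabla g \<xi> \<xi> x + nabla g \<xi>p \<xi>p x) (\<xi> x) = 0"
      using rel[of \<xi>, unfolded commute] rel[of \<xi>p] unfolding bform_add_left by linarith
    show "bform (g x) (nabla g \<xi> \<xi> x + nabla g \<xi>p \<xi>p x) (\<xi>p x) = 0"
      using rel[of \<xi>, unfolded commute] rel[of \<xi>p] unfolding bform_add_left by linarith
  qed
qed

lemma D_trace:
  assumes x: "x \<in> U"
  shows "A x + bform (D x) (\<xi>p x) (\<xi>p x) = 0"
proof -
  interpret F: conformal_frame "g x" "\<xi> x" "\<xi>p x" "N x" by (rule frame[OF x])
  have "(\<Sum>a\<in>UNIV. \<Sum>b\<in>UNIV. ginv g x $ a $ b * D x $ a $ b) = 0"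
    using traceless x unfolding traceless_on_def by blast
  then show ?thesis
    unfolding ginv_eq[OF x] F.trace_frame_inverse A_def using F.N_pos by simp
qed

lemma D_\<xi>_expansion:
  "x \<in> U \<Longrightarrow> bform (D x) (\<xi> x) v = (bform (g x) v (\<xi> x) / N x) * A x + (bform (g x) v (\<xi>p x) / N x) * B x"
  unfolding A_def B_def by (rule conformal_frame.bform_frame_expansion[OF frame])

lemma D_\<xi>p_expansion:
  assumes x: "x \<in> U"
  shows "bform (D x) (\<xi>p x) v = (bform (g x) v (\<xi> x) / N x) * B x - (bform (g x) v (\<xi>p x) / N x) * A x"
proof -
  have "bform (D x) (\<xi>p x) (\<xi> x) = B x"
    unfolding B_def using bform_commute[OF D_symmetric[OF x]] by metis
  moreover have "bform (D x) (\<xi>p x) (\<xi>p x) = - A x"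
    using D_trace[OF x] by simp
  ultimately show ?thesis
    using conformal_frame.bform_frame_expansion[OF frame[OF x], of "D x" "\<xi>p x" v] by simp
qed

lemma transverse_frame:
  assumes x: "x \<in> U" and Y: "differentiable_vfield_at Y x"
  shows "vf_deriv \<xi> (\<lambda>y. bform (D y) (\<xi> y) (Y y)) x + vf_deriv \<xi>p (\<lambda>y. bform (D y) (\<xi>p y) (Y y)) x =
      bform (D x) (\<xi> x) (nabla g \<xi> Y x) + bform (D x) (\<xi>p x) (nabla g \<xi>p Y x)"
proof -
  interpret F: conformal_frame "g x" "\<xi> x" "\<xi>p x" "N x" by (rule frame[OF x])
  have "(\<Sum>c\<in>UNIV. Y x$c * (\<Sum>a\<in>UNIV. \<Sum>b\<in>UNIV. ginv g x $ a $ b * cov_deriv g D x a b c)) = 0"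
    using transverse x unfolding transverse_on_def by simp
  then have "(\<Sum>a\<in>UNIV. \<Sum>b\<in>UNIV. \<Sum>c\<in>UNIV. \<xi> x$a * \<xi> x$b * Y x$c * cov_deriv g D x a b c)
      + (\<Sum>a\<in>UNIV. \<Sum>b\<in>UNIV. \<Sum>c\<in>UNIV. \<xi>p x$a * \<xi>p x$b * Y x$c * cov_deriv g D x a b c) = 0"
    unfolding ginv_eq[OF x] F.contract_frame_inverse using F.N_pos by simp
  moreover have "bform (D x) (nabla g \<xi> \<xi> x) (Y x) + bform (D x) (nabla g \<xi>p \<xi>p x) (Y x) = 0"
    unfolding bform_add_left[symmetric] nabla_frame_sum_eq_0[OF x] by simp
  ultimately show ?thesis
    unfolding cov_deriv_contract[OF differentiable_at(2,3)[OF x] Y]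
      cov_deriv_contract[OF differentiable_at(2,4)[OF x] Y]
    by linarith
qed

lemma D_nabla_frame_eq_0:
  assumes x: "x \<in> U"
  shows "bform (D x) (\<xi> x) (nabla g \<xi> \<xi> x) + bform (D x) (\<xi>p x) (nabla g \<xi>p \<xi> x) = 0"
    and "bform (D x) (\<xi> x) (nabla g \<xi> \<xi>p x) + bform (D x) (\<xi>p x) (nabla g \<xi>p \<xi>p x) = 0"
proof -
  note rel = nabla_orthogonal[OF x] nabla_norm_eq[OF x]
  note commute = nabla_\<xi>_\<xi>p_commute[OF x]
  have N: "N x \<noteq> 0"
    using conformal_frame.N_pos[OF frame[OF x]] by simp
  let ?G = "\<lambda>X Y Z. bform (g x) (nabla g X Y x) (Z x)"
  have "bform (D x) (\<xi> x) (nabla g \<xi> \<xi> x) + bform (D x) (\<xi>p x) (nabla g \<xi>p \<xi> x) =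
      (A x * (?G \<xi> \<xi> \<xi> - ?G \<xi>p \<xi> \<xi>p) + B x * (?G \<xi> \<xi> \<xi>p + ?G \<xi>p \<xi> \<xi>)) / N x"
    unfolding D_\<xi>_expansion[OF x] D_\<xi>p_expansion[OF x] using N by (simp add: field_simps)
  also have "\<dots> = 0"
    using rel[of \<xi>] unfolding commute by simp
  finally show "bform (D x) (\<xi> x) (nabla g \<xi> \<xi> x) + bform (D x) (\<xi>p x) (nabla g \<xi>p \<xi> x) = 0" .
  have "bform (D x) (\<xi> x) (nabla g \<xi> \<xi>p x) + bform (D x) (\<xi>p x) (nabla g \<xi>p \<xi>p x) =
      (A x * (?G \<xi> \<xi>p \<xi> - ?G \<xi>p \<xi>p \<xi>p) + B x * (?G \<xi> \<xi>p \<xi>p + ?G \<xi>p \<xi>p \<xi>)) / N x"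
    unfolding D_\<xi>_expansion[OF x] D_\<xi>p_expansion[OF x] using N by (simp add: field_simps)
  also have "\<dots> = 0"
    using rel[of \<xi>] rel[of \<xi>p] unfolding commute by (simp add: algebra_simps)
  finally show "bform (D x) (\<xi> x) (nabla g \<xi> \<xi>p x) + bform (D x) (\<xi>p x) (nabla g \<xi>p \<xi>p x) = 0" .
qed

lemma vf_deriv_\<xi>p_B:
  assumes x: "x \<in> U"
  shows "vf_deriv \<xi>p B x = 0"
proof -
  have "vf_deriv \<xi>p (\<lambda>y. bform (D y) (\<xi>p y) (\<xi> y)) x = vf_deriv \<xi>p B x"
    using D_symmetric bform_commute B_differentiable[OF x]
    by (intro vf_deriv_cong_open[OF open_U x]) (auto simp: B_def)
  then show ?thesis
    using transverse_frame[OF x differentiable_at(3)[OF x]] D_nabla_frame_eq_0(1)[OF x] vf_deriv_\<xi>_A[OF x]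
    unfolding A_def[abs_def] by simp
qed

lemma vf_deriv_\<xi>p_A:
  assumes x: "x \<in> U"
  shows "vf_deriv \<xi>p A x = 0"
proof -
  have "vf_deriv \<xi>p (\<lambda>y. bform (D y) (\<xi>p y) (\<xi>p y)) x = vf_deriv \<xi>p (\<lambda>y. - A y) x"
    using D_trace A_differentiable[OF x]
    by (intro vf_deriv_cong_open[OF open_U x]) (auto simp: add_eq_0_iff)
  then show ?thesis
    using transverse_frame[OF x differentiable_at(4)[OF x]] D_nabla_frame_eq_0(2)[OF x] vf_deriv_\<xi>_B[OF x]
      vf_deriv_minus[OF A_differentiable[OF x]]
    unfolding B_def[abs_def] by simp
qed

lemma pd_A_B_eq_0:
  assumes x: "x \<in> U"
  shows "pd k A x = 0" "pd k B x = 0"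
proof -
  interpret F: conformal_frame "g x" "\<xi> x" "\<xi>p x" "N x" by (rule frame[OF x])
  have "(\<chi> k. pd k A x) = 0" "(\<chi> k. pd k B x) = 0"
    using vf_deriv_\<xi>_A[OF x] vf_deriv_\<xi>p_A[OF x] vf_deriv_\<xi>_B[OF x] vf_deriv_\<xi>p_B[OF x]
    by (auto intro: F.eq_0_if_inner_frame_eq_0 simp: vf_deriv_eq_inner)
  then show "pd k A x = 0" "pd k B x = 0"
    by (simp_all add: vec_eq_iff)
qed

lemma D_expansion:
  assumes x: "x \<in> U"
  shows "D x$i$j = 2 * A x * D_xi g \<xi> x $ i $ j + 2 * B x * D_xi_perp g \<xi> \<xi>p x $ i $ j"
  using conformal_frame.traceless_expansion[OF frame[OF x] D_symmetric[OF x] D_trace[OF x, unfolded A_def]]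
    norm_eq[OF x]
  unfolding D_xi_def D_xi_perp_def flat_def gdot_eq_bform A_def B_def N_def by simp

end

theorem theorem9p2:
  fixes U :: "(real^2) set" and g D :: tfield and \<xi> \<xi>p :: vfield
  assumes "open U" and "connected U"
    and "riemannian_metric_on g U"
    and "conformal_killing_on g \<xi> U"
    and "\<forall>x\<in>U. \<xi> x \<noteq> 0"
    and "conformal_killing_on g \<xi>p U"
    and "\<forall>x\<in>U. gdot g x (\<xi> x) (\<xi>p x) = 0"
    and "\<forall>x\<in>U. gdot g x (\<xi>p x) (\<xi>p x) = gdot g x (\<xi> x) (\<xi> x)"
    and "smooth_tfield_on D U" and "symmetric_tfield_on D U"
    and "transverse_on g D U" and "traceless_on g D U"
    and "\<forall>x\<in>U. \<forall>i j. lie_deriv \<xi> D x i j = 0"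
  shows "\<exists>a b :: real. \<forall>x\<in>U. \<forall>i j.
           D x $ i $ j = a * D_xi g \<xi> x $ i $ j + b * D_xi_perp g \<xi> \<xi>p x $ i $ j"
proof -
  obtain s where "\<forall>x\<in>U. \<forall>i j. lie_deriv \<xi> g x i j = s x * g x $ i $ j"
    using assms(4) unfolding conformal_killing_on_def by blast
  then interpret kid_setting U g D \<xi> \<xi>p s
    using assms unfolding conformal_killing_on_def gdot_eq_bform by unfold_locales auto
  obtain a where a: "\<And>x. x \<in> U \<Longrightarrow> A x = a"
    using constant_on_if_pd_eq_0[OF assms(1,2) A_differentiable pd_A_B_eq_0(1)] by blast
  obtain b where b: "\<And>x. x \<in> U \<Longrightarrow> B x = b"
    using constant_on_if_pd_eq_0[OF assms(1,2) B_differentiable pd_A_B_eq_0(2)] by blast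
  show ?thesis
    using D_expansion a b by (intro exI[of _ "2 * a"] exI[of _ "2 * b"]) auto
qed

end
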